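(* Let $L_0$ be a countable complete lattice whose Scott space $\Sigma L_0$ is not sober. Then neither $\Sigma\Gamma(L_0)$ nor $\Sigma\mathcal Q(L_0)$ is sober.
   Context: For a complete lattice $L$, $\Sigma L$ is $L$ with the Scott topology (a set $U$ is Scott open iff it is an upper set and for every directed $D$, $\bigvee D\in U$ implies $D\cap U\neq\emptyset$). $\Gamma(L)$ is the lattice of closed subsets of $\Sigma L$ ordered by inclusion, and $\mathcal Q(L)$ is the poset of nonempty compact saturated subsets of $\Sigma L$ (saturated = upper set) ordered by reverse inclusion; $\Sigma\Gamma(L)$ and $\Sigma\mathcal Q(L)$ denote these posets with their Scott topologies. A $T_0$ space is sober if every irreducible closed set equals $\overline{\{x\}}$ for some point $x$. (Such a countable complete lattice $L_0$ exists.) *)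

theory Defs
  imports "HOL-Analysis.Analysis"
begin

definition directed_in :: "'a set \<Rightarrow> ('a \<Rightarrow> 'a \<Rightarrow> bool) \<Rightarrow> 'a set \<Rightarrow> bool" where
  "directed_in P le D \<longleftrightarrow> D \<subseteq> P \<and> D \<noteq> {} \<and>
     (\<forall>x\<in>D. \<forall>y\<in>D. \<exists>z\<in>D. le x z \<and> le y z)"

definition is_lub_in :: "'a set \<Rightarrow> ('a \<Rightarrow> 'a \<Rightarrow> bool) \<Rightarrow> 'a set \<Rightarrow> 'a \<Rightarrow> bool" where
  "is_lub_in P le D s \<longleftrightarrow> s \<in> P \<and> (\<forall>d\<in>D. le d s) \<and>
     (\<forall>u\<in>P. (\<forall>d\<in>D. le d u) \<longrightarrow> le s u)"

definition scott_open :: "'a set \<Rightarrow> ('a \<Rightarrow> 'a \<Rightarrow> bool) \<Rightarrow> 'a set \<Rightarrow> bool" where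
  "scott_open P le U \<longleftrightarrow> U \<subseteq> P \<and>
     (\<forall>x\<in>U. \<forall>y\<in>P. le x y \<longrightarrow> y \<in> U) \<and>
     (\<forall>D s. directed_in P le D \<longrightarrow> is_lub_in P le D s \<longrightarrow> s \<in> U \<longrightarrow> D \<inter> U \<noteq> {})"

definition scott_topology :: "'a set \<Rightarrow> ('a \<Rightarrow> 'a \<Rightarrow> bool) \<Rightarrow> 'a topology" where
  "scott_topology P le = topology (scott_open P le)"

definition Sigma_L :: "'a::complete_lattice topology" where
  "Sigma_L = scott_topology UNIV (\<le>)"

definition Gamma_L :: "'a::complete_lattice set set" where
  "Gamma_L = {C. closedin Sigma_L C}"

text \<open>Q(L): nonempty compact saturated (= upper) subsets of Sigma L, ordered by reverse inclusion.\<close>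
definition Q_L :: "'a::complete_lattice set set" where
  "Q_L = {K. K \<noteq> {} \<and> compactin Sigma_L K \<and> (\<forall>x\<in>K. \<forall>y. x \<le> y \<longrightarrow> y \<in> K)}"

definition Sigma_Gamma :: "'a::complete_lattice set topology" where
  "Sigma_Gamma = scott_topology Gamma_L (\<subseteq>)"

definition Sigma_Q :: "'a::complete_lattice set topology" where
  "Sigma_Q = scott_topology Q_L (\<lambda>A B. B \<subseteq> A)"

definition irreducible_in :: "'a topology \<Rightarrow> 'a set \<Rightarrow> bool" where
  "irreducible_in X A \<longleftrightarrow> A \<noteq> {} \<and> A \<subseteq> topspace X \<and>
     (\<forall>B C. closedin X B \<longrightarrow> closedin X C \<longrightarrow> A \<subseteq> B \<union> C \<longrightarrow> A \<subseteq> B \<or> A \<subseteq> C)"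

definition sober_space :: "'a topology \<Rightarrow> bool" where
  "sober_space X \<longleftrightarrow> t0_space X \<and>
     (\<forall>A. closedin X A \<and> irreducible_in X A \<longrightarrow> (\<exists>x\<in>topspace X. A = X closure_of {x}))"

end

theory Submission
  imports Defs
begin

(*
  For \<Gamma>(L): x \<mapsto> \<down>x and Sup are Scott continuous with Sup \<circ> \<down> = id, so \<Sigma>L is a retract
  of \<Sigma>\<Gamma>(L), and retracts of sober spaces are sober.

  For Q(L): \<Sigma>L is well-filtered (Xi and Lawson), so for a Scott closed A the sets
  {K \<in> Q(L). K \<inter> A = {}} are Scott open in Q(L). If A is irreducible and closed but
  Sup A \<notin> A, the generic point K0 of the closure of {\<up>a | a \<in> A} lies in \<up>(Sup A), which
  is disjoint from A; hence that open set meets {\<up>a | a \<in> A}, which is absurd.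
*)

unbundle lattice_syntax

lemma istopology_scott_open: "istopology (scott_open P le)"
  unfolding istopology_def
proof (intro conjI allI impI)
  fix S T assume S: "scott_open P le S" and T: "scott_open P le T"
  show "scott_open P le (S \<inter> T)"
    unfolding scott_open_def
  proof (intro conjI allI impI ballI)
    fix D s assume D: "directed_in P le D" and s: "is_lub_in P le D s" "s \<in> S \<inter> T"
    obtain d1 d2 where "d1 \<in> D \<inter> S" "d2 \<in> D \<inter> T"
      using S T D s unfolding scott_open_def by blast
    moreover obtain z where "z \<in> D" "le d1 z" "le d2 z" "z \<in> P"
      using D calculation unfolding directed_in_def by blast
    ultimately show "D \<inter> (S \<inter> T) \<noteq> {}"
      using S T unfolding scott_open_def by blast
  qed (use S T in \<open>auto simp: scott_open_def\<close>)
next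
  fix \<S> assume \<S>: "\<forall>S\<in>\<S>. scott_open P le S"
  show "scott_open P le (\<Union>\<S>)"
    unfolding scott_open_def
  proof (intro conjI allI impI ballI)
    fix D s assume D: "directed_in P le D" "is_lub_in P le D s" and "s \<in> \<Union>\<S>"
    then obtain S where "S \<in> \<S>" "s \<in> S" by blast
    then have "D \<inter> S \<noteq> {}" using \<S> D unfolding scott_open_def by blast
    then show "D \<inter> \<Union>\<S> \<noteq> {}" using \<open>S \<in> \<S>\<close> by blast
  qed (use \<S> in \<open>auto simp: scott_open_def\<close>)
qed

lemma openin_scott_topology: "openin (scott_topology P le) U \<longleftrightarrow> scott_open P le U"
  by (simp add: scott_topology_def istopology_scott_open)

lemma topspace_scott_topology: "topspace (scott_topology P le) = P"
proof -
  have "scott_open P le P" unfolding scott_open_def directed_in_def by blast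
  then show ?thesis
    unfolding topspace_def openin_scott_topology scott_open_def by blast
qed

lemma closedin_scott_topology:
  "closedin (scott_topology P le) C \<longleftrightarrow> C \<subseteq> P \<and> scott_open P le (P - C)"
  by (simp add: closedin_def topspace_scott_topology openin_scott_topology)

lemma closedin_scott_topology_lower:
  assumes "closedin (scott_topology P le) C" "x \<in> C" "y \<in> P" "le y x"
  shows "y \<in> C"
  using assms unfolding closedin_scott_topology scott_open_def by blast

lemma closedin_scott_topology_directed_lub:
  assumes "closedin (scott_topology P le) C" "directed_in P le D" "D \<subseteq> C" "is_lub_in P le D s"
  shows "s \<in> C"
  using assms unfolding closedin_scott_topology scott_open_def is_lub_in_def by blast

lemma closedin_scott_topology_principal_ideal:
  assumes trans: "\<And>a b c. a \<in> P \<Longrightarrow> b \<in> P \<Longrightarrow> c \<in> P \<Longrightarrow> le a b \<Longrightarrow> le b c \<Longrightarrow> le a c"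
    and "x \<in> P"
  shows "closedin (scott_topology P le) {y \<in> P. le y x}"
  unfolding closedin_scott_topology scott_open_def
proof (intro conjI allI impI ballI)
  fix D s assume "directed_in P le D" "is_lub_in P le D s" "s \<in> P - {y \<in> P. le y x}"
  then show "D \<inter> (P - {y \<in> P. le y x}) \<noteq> {}"
    using \<open>x \<in> P\<close> unfolding directed_in_def is_lub_in_def by blast
qed (use assms in blast)+

lemma scott_topology_closure_of_singleton:
  assumes trans: "\<And>a b c. a \<in> P \<Longrightarrow> b \<in> P \<Longrightarrow> c \<in> P \<Longrightarrow> le a b \<Longrightarrow> le b c \<Longrightarrow> le a c"
    and refl: "\<And>a. a \<in> P \<Longrightarrow> le a a"
    and "x \<in> P"
  shows "scott_topology P le closure_of {x} = {y \<in> P. le y x}"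
proof
  show "scott_topology P le closure_of {x} \<subseteq> {y \<in> P. le y x}"
    using closedin_scott_topology_principal_ideal[OF trans \<open>x \<in> P\<close>] refl \<open>x \<in> P\<close>
    by (intro closure_of_minimal) auto
  have "{x} \<subseteq> topspace (scott_topology P le)"
    using \<open>x \<in> P\<close> by (simp add: topspace_scott_topology)
  then have "x \<in> scott_topology P le closure_of {x}"
    using closure_of_subset by blast
  then show "{y \<in> P. le y x} \<subseteq> scott_topology P le closure_of {x}"
    by (auto intro: closedin_scott_topology_lower[OF closedin_closure_of])
qed

lemma directed_in_image:
  assumes "directed_in P le D" "f ` D \<subseteq> Q"
    and "\<And>x y. x \<in> D \<Longrightarrow> y \<in> D \<Longrightarrow> le x y \<Longrightarrow> le' (f x) (f y)"
  shows "directed_in Q le' (f ` D)"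
  unfolding directed_in_def
proof (intro conjI ballI)
  fix u v assume "u \<in> f ` D" "v \<in> f ` D"
  then obtain x y where "x \<in> D" "y \<in> D" "u = f x" "v = f y" by blast
  moreover obtain z where "z \<in> D" "le x z" "le y z"
    using assms(1) calculation unfolding directed_in_def by blast
  ultimately show "\<exists>w\<in>f ` D. le' u w \<and> le' v w" using assms(3) by auto
qed (use assms in \<open>auto simp: directed_in_def\<close>)

lemma continuous_map_scott_topology:
  assumes maps: "f ` P \<subseteq> P'"
    and mono: "\<And>x y. x \<in> P \<Longrightarrow> y \<in> P \<Longrightarrow> le x y \<Longrightarrow> le' (f x) (f y)"
    and lub: "\<And>D s. directed_in P le D \<Longrightarrow> is_lub_in P le D s \<Longrightarrow> is_lub_in P' le' (f ` D) (f s)"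
  shows "continuous_map (scott_topology P le) (scott_topology P' le') f"
  unfolding continuous_map topspace_scott_topology openin_scott_topology
proof (intro conjI allI impI maps)
  fix U assume U: "scott_open P' le' U"
  show "scott_open P le {x \<in> P. f x \<in> U}"
    unfolding scott_open_def
  proof (intro conjI allI impI ballI)
    fix D s assume D: "directed_in P le D" and s: "is_lub_in P le D s" "s \<in> {x \<in> P. f x \<in> U}"
    have "D \<subseteq> P" using D unfolding directed_in_def by blast
    then have "directed_in P' le' (f ` D)"
      by (intro directed_in_image[OF D]) (use maps mono in blast)+
    moreover have "f s \<in> U" using s(2) by simp
    ultimately have "f ` D \<inter> U \<noteq> {}"
      using U lub[OF D s(1)] unfolding scott_open_def by blast
    then show "D \<inter> {x \<in> P. f x \<in> U} \<noteq> {}" using \<open>D \<subseteq> P\<close> by blast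
  next
    fix x y assume "x \<in> {x \<in> P. f x \<in> U}" "y \<in> P" "le x y"
    moreover from this have "le' (f x) (f y)" "f y \<in> P'" using mono maps by auto
    ultimately show "y \<in> {x \<in> P. f x \<in> U}"
      using U unfolding scott_open_def by blast
  qed auto
qed

section \<open>Sober spaces and retracts\<close>

lemma irreducible_in_closure_of_image:
  assumes f: "continuous_map X Y f" and A: "irreducible_in X A"
  shows "irreducible_in Y (Y closure_of (f ` A))"
  unfolding irreducible_in_def
proof (intro conjI allI impI)
  have A_ne: "A \<noteq> {}" and AX: "A \<subseteq> topspace X"
    and A_irr: "\<And>B C. closedin X B \<Longrightarrow> closedin X C \<Longrightarrow> A \<subseteq> B \<union> C \<Longrightarrow> A \<subseteq> B \<or> A \<subseteq> C"
    using A unfolding irreducible_in_def by blast+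
  have "f ` A \<subseteq> topspace Y"
    using AX continuous_map_image_subset_topspace[OF f] by blast
  then have fA: "f ` A \<subseteq> Y closure_of f ` A" by (rule closure_of_subset)
  then show "Y closure_of f ` A \<noteq> {}" using A_ne by blast
  show "Y closure_of f ` A \<subseteq> topspace Y" by (rule closure_of_subset_topspace)
  fix B C assume B: "closedin Y B" and C: "closedin Y C" and BC: "Y closure_of f ` A \<subseteq> B \<union> C"
  have "A \<subseteq> {x \<in> topspace X. f x \<in> B} \<union> {x \<in> topspace X. f x \<in> C}"
    using BC fA AX by blast
  then have "A \<subseteq> {x \<in> topspace X. f x \<in> B} \<or> A \<subseteq> {x \<in> topspace X. f x \<in> C}"
    by (rule A_irr[OF closedin_continuous_map_preimage[OF f B] closedin_continuous_map_preimage[OF f C]])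
  then have "f ` A \<subseteq> B \<or> f ` A \<subseteq> C" by blast
  then show "Y closure_of f ` A \<subseteq> B \<or> Y closure_of f ` A \<subseteq> C"
    using closure_of_minimal[OF _ B] closure_of_minimal[OF _ C] by blast
qed

lemma sober_space_generic_point:
  assumes "sober_space X" "closedin X A" "irreducible_in X A"
  obtains x where "x \<in> topspace X" "A = X closure_of {x}"
  using assms unfolding sober_space_def by blast

lemma sober_space_retract:
  assumes s: "continuous_map X Y s" and r: "continuous_map Y X r"
    and rs: "\<And>x. x \<in> topspace X \<Longrightarrow> r (s x) = x"
    and "sober_space Y" and "t0_space X"
  shows "sober_space X"
  unfolding sober_space_def
proof (intro conjI allI impI \<open>t0_space X\<close>)
  fix A assume "closedin X A \<and> irreducible_in X A"
  then have A_closed: "closedin X A" and "irreducible_in X A" by blast+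
  then have AX: "A \<subseteq> topspace X" using closedin_subset by blast
  have "irreducible_in Y (Y closure_of (s ` A))"
    using irreducible_in_closure_of_image[OF s \<open>irreducible_in X A\<close>] .
  then obtain y where y: "Y closure_of (s ` A) = Y closure_of {y}" "y \<in> topspace Y"
    using sober_space_generic_point[OF \<open>sober_space Y\<close> closedin_closure_of] by blast
  have rsA: "r ` s ` A = A" using rs AX by (force simp: image_image)
  have "y \<in> Y closure_of (s ` A)" using y closure_of_subset[of "{y}" Y] by auto
  then have "r y \<in> r ` (Y closure_of (s ` A))" by blast
  also have "\<dots> \<subseteq> X closure_of (r ` s ` A)" by (rule continuous_map_image_closure_subset[OF r])
  also have "\<dots> = A" using rsA closure_of_closedin[OF A_closed] by simp
  finally have ryA: "r y \<in> A" .
  have "A \<subseteq> X closure_of {r y}"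
  proof
    fix a assume "a \<in> A"
    have "s ` A \<subseteq> topspace Y" using AX continuous_map_image_subset_topspace[OF s] by blast
    then have "s a \<in> Y closure_of {y}" using y(1) closure_of_subset \<open>a \<in> A\<close> by blast
    then have "r (s a) \<in> r ` (Y closure_of {y})" by blast
    also have "\<dots> \<subseteq> X closure_of (r ` {y})" by (rule continuous_map_image_closure_subset[OF r])
    finally show "a \<in> X closure_of {r y}" using rs AX \<open>a \<in> A\<close> by auto
  qed
  moreover have "X closure_of {r y} \<subseteq> A"
    using ryA A_closed by (intro closure_of_minimal) auto
  ultimately show "\<exists>x\<in>topspace X. A = X closure_of {x}" using ryA AX by blast
qed

lemma openin_Sigma_L: "openin Sigma_L U \<longleftrightarrow> scott_open UNIV (\<le>) U"
  by (simp add: Sigma_L_def openin_scott_topology)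

lemma topspace_Sigma_L [simp]: "topspace Sigma_L = UNIV"
  by (simp add: Sigma_L_def topspace_scott_topology)

lemma closedin_Sigma_L: "closedin Sigma_L C \<longleftrightarrow> openin Sigma_L (- C)"
  by (simp add: closedin_def Compl_eq_Diff_UNIV)

lemma is_lub_in_UNIV_iff [simp]: "is_lub_in UNIV (\<le>) D s \<longleftrightarrow> s = Sup (D :: 'a::complete_lattice set)"
  unfolding is_lub_in_def by (auto intro: Sup_upper Sup_least antisym)

lemma directed_in_UNIV_iff:
  "directed_in UNIV (\<le>) D \<longleftrightarrow> D \<noteq> {} \<and> (\<forall>x\<in>D. \<forall>y\<in>D. \<exists>z\<in>D. x \<le> z \<and> (y :: 'a::order) \<le> z)"
  unfolding directed_in_def by auto

lemma openin_Sigma_L_upper: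
  assumes "openin Sigma_L U" "x \<in> U" "x \<le> y"
  shows "y \<in> U"
  using assms unfolding openin_Sigma_L scott_open_def by blast

lemma openin_Sigma_L_directed_Sup:
  assumes "openin Sigma_L U" "directed_in UNIV (\<le>) D" "Sup D \<in> U"
  obtains d where "d \<in> D" "d \<in> U"
  using assms unfolding openin_Sigma_L scott_open_def by force

lemma closedin_Sigma_L_lower:
  assumes "closedin Sigma_L C" "x \<in> C" "y \<le> x"
  shows "y \<in> C"
  using assms closedin_scott_topology_lower[of UNIV "(\<le>)" C x y] by (simp add: Sigma_L_def)

lemma closedin_Sigma_L_directed_Sup:
  assumes "closedin Sigma_L C" "directed_in UNIV (\<le>) D" "D \<subseteq> C"
  shows "Sup D \<in> C"
  using assms closedin_scott_topology_directed_lub[of UNIV "(\<le>)" C D "Sup D"]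
  by (simp add: Sigma_L_def)

lemma closedin_Sigma_L_atMost: "closedin Sigma_L {..x}"
  using closedin_scott_topology_principal_ideal[of UNIV "(\<le>)" x]
  by (simp add: Sigma_L_def atMost_def)

lemma Sigma_L_closure_of_singleton: "Sigma_L closure_of {x} = {..x}"
  using scott_topology_closure_of_singleton[of UNIV "(\<le>)" x]
  by (simp add: Sigma_L_def atMost_def)

lemma t0_space_Sigma_L: "t0_space Sigma_L"
  unfolding t0_space_def
proof (intro ballI impI)
  fix x y :: 'a assume "x \<noteq> y"
  then have "\<not> x \<le> y \<or> \<not> y \<le> x" by auto
  moreover have "openin Sigma_L (- {..z})" for z :: 'a
    using closedin_Sigma_L_atMost closedin_Sigma_L by blast
  ultimately show "\<exists>U. openin Sigma_L U \<and> (x \<notin> U) = (y \<in> U)" by fastforce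
qed

lemma closedin_Sigma_L_eq_closure_of_Sup:
  assumes "closedin Sigma_L A" "Sup A \<in> A"
  shows "A = Sigma_L closure_of {Sup A}"
  using closedin_Sigma_L_lower[OF assms] unfolding Sigma_L_closure_of_singleton
  by (auto intro: Sup_upper)

lemma continuous_map_Sigma_L_sup_const: "continuous_map Sigma_L Sigma_L (\<lambda>x. x \<squnion> c)"
  unfolding Sigma_L_def
proof (rule continuous_map_scott_topology)
  fix D and s :: 'a assume "directed_in UNIV (\<le>) D" "is_lub_in UNIV (\<le>) D s"
  then show "is_lub_in UNIV (\<le>) ((\<lambda>x. x \<squnion> c) ` D) (s \<squnion> c)"
    by (simp add: directed_in_def SUP_sup_const2)
qed (auto intro: le_supI1)

lemma openin_Sigma_L_sup_const: "openin Sigma_L U \<Longrightarrow> openin Sigma_L {x. x \<squnion> c \<in> U}"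
  using openin_continuous_map_preimage[OF continuous_map_Sigma_L_sup_const] by simp

lemma directed_finite_upper_bound:
  assumes "finite F" "F \<subseteq> D" "D \<noteq> {}" "\<forall>x\<in>D. \<forall>y\<in>D. \<exists>z\<in>D. x \<le> z \<and> y \<le> z"
  shows "\<exists>d\<in>D. \<forall>x\<in>F. x \<le> (d::'a::order)"
  using assms(1,2)
proof (induction F rule: finite_induct)
  case empty
  then show ?case using assms(3) by blast
next
  case (insert x F)
  then obtain d where "d \<in> D" "\<forall>y\<in>F. y \<le> d" by blast
  moreover obtain z where "z \<in> D" "x \<le> z" "d \<le> z" using assms(4) calculation insert by blast
  ultimately show ?case by (auto intro: order_trans)
qed

lemma openin_Sigma_L_compact_sup:
  assumes S: "compactin Sigma_L S" and U: "openin Sigma_L U"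
  shows "openin Sigma_L {z. \<forall>y\<in>S. y \<squnion> z \<in> U}"
  unfolding openin_Sigma_L scott_open_def
proof (intro conjI allI impI ballI)
  fix x z :: 'a assume "x \<in> {z. \<forall>y\<in>S. y \<squnion> z \<in> U}" "x \<le> z"
  then show "z \<in> {z. \<forall>y\<in>S. y \<squnion> z \<in> U}"
    using openin_Sigma_L_upper[OF U] sup_mono[OF order_refl \<open>x \<le> z\<close>] by blast
next
  fix D s assume D: "directed_in UNIV (\<le>) D" and "is_lub_in UNIV (\<le>) D s"
    and "s \<in> {z. \<forall>y\<in>S. y \<squnion> z \<in> U}"
  then have DU: "\<forall>y\<in>S. y \<squnion> Sup D \<in> U" by simp
  let ?V = "\<lambda>d. {y. y \<squnion> d \<in> U}"
  have "S \<subseteq> \<Union> (?V ` D)"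
  proof
    fix y assume "y \<in> S"
    then have "Sup D \<in> {x. x \<squnion> y \<in> U}" using DU by (simp add: sup_commute)
    then obtain d where "d \<in> D" "d \<squnion> y \<in> U"
      using openin_Sigma_L_directed_Sup[OF openin_Sigma_L_sup_const[OF U] D] by blast
    then show "y \<in> \<Union> (?V ` D)" by (auto simp: sup_commute)
  qed
  moreover have "\<forall>V\<in>?V ` D. openin Sigma_L V" using openin_Sigma_L_sup_const[OF U] by blast
  ultimately have "\<exists>\<F>. finite \<F> \<and> \<F> \<subseteq> ?V ` D \<and> S \<subseteq> \<Union>\<F>"
    using S unfolding compactin_def by simp
  then obtain \<F> where "finite \<F>" "\<F> \<subseteq> ?V ` D" "S \<subseteq> \<Union>\<F>" by blast
  moreover obtain F where "F \<subseteq> D" "finite F" "\<F> = ?V ` F"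
    using finite_subset_image[OF calculation(1,2)] by blast
  ultimately have F: "finite F" "F \<subseteq> D" "S \<subseteq> \<Union> (?V ` F)" by simp_all
  obtain d0 where d0: "d0 \<in> D" "\<forall>d\<in>F. d \<le> d0"
    using directed_finite_upper_bound[OF F(1,2)] D unfolding directed_in_UNIV_iff by blast
  have "y \<squnion> d0 \<in> U" if "y \<in> S" for y
  proof -
    obtain d where "d \<in> F" "y \<squnion> d \<in> U" using F(3) \<open>y \<in> S\<close> by blast
    moreover from this have "y \<squnion> d \<le> y \<squnion> d0" using d0(2) by (intro sup_mono) auto
    ultimately show ?thesis using openin_Sigma_L_upper[OF U] by blast
  qed
  then have "d0 \<in> D \<inter> {z. \<forall>y\<in>S. y \<squnion> z \<in> U}" using d0(1) by simp
  then show "D \<inter> {z. \<forall>y\<in>S. y \<squnion> z \<in> U} \<noteq> {}" by blast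
qed simp

lemma closedin_Sigma_L_Sup_mem:
  assumes C: "closedin Sigma_L C" and join: "\<And>a b. a \<in> C \<Longrightarrow> b \<in> C \<Longrightarrow> a \<squnion> b \<in> C"
    and "S \<subseteq> C" "S \<noteq> {}"
  shows "Sup S \<in> C"
proof -
  have "directed_in UNIV (\<le>) C"
    unfolding directed_in_UNIV_iff
  proof (intro conjI ballI)
    show "C \<noteq> {}" using \<open>S \<subseteq> C\<close> \<open>S \<noteq> {}\<close> by blast
    fix x y assume "x \<in> C" "y \<in> C"
    then show "\<exists>z\<in>C. x \<le> z \<and> y \<le> z" using join by (intro bexI[of _ "x \<squnion> y"]) auto
  qed
  then have "Sup C \<in> C" using closedin_Sigma_L_directed_Sup[OF C] by blast
  moreover have "Sup S \<le> Sup C" using \<open>S \<subseteq> C\<close> by (rule Sup_subset_mono)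
  ultimately show ?thesis using closedin_Sigma_L_lower[OF C] by blast
qed

lemma closedin_Sigma_L_Sup_mem_if_sup_stable:
  assumes G: "closedin Sigma_L G" and "\<bottom> \<in> G" and stable: "\<And>c a. c \<in> G \<Longrightarrow> a \<in> A \<Longrightarrow> c \<squnion> a \<in> G"
  shows "Sup A \<in> G"
proof -
  define H where "H = {a. \<forall>c\<in>G. a \<squnion> c \<in> G}"
  have "H = (\<Inter>c\<in>G. {a. a \<squnion> c \<in> G})" unfolding H_def by blast
  moreover have "closedin Sigma_L {a. a \<squnion> c \<in> G}" for c
    using closedin_continuous_map_preimage[OF continuous_map_Sigma_L_sup_const G] by simp
  ultimately have "closedin Sigma_L H" using \<open>\<bottom> \<in> G\<close> by (metis closedin_INT empty_iff)
  moreover have "a1 \<squnion> a2 \<in> H" if "a1 \<in> H" "a2 \<in> H" for a1 a2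
    using that unfolding H_def by (simp add: sup_assoc)
  moreover have "a \<squnion> c \<in> G" if "a \<in> A" "c \<in> G" for a c
    using stable[OF that(2,1)] by (simp add: sup_commute)
  then have "insert \<bottom> A \<subseteq> H" unfolding H_def by auto
  ultimately have "Sup (insert \<bottom> A) \<in> H" by (intro closedin_Sigma_L_Sup_mem) auto
  then show ?thesis using \<open>\<bottom> \<in> G\<close> unfolding H_def by auto
qed

section \<open>Well-filteredness of \<open>\<Sigma>L\<close>\<close>

lemma compactin_subset_chain_member:
  assumes "compactin X K" "K \<subseteq> \<Union>\<C>" "\<C> \<noteq> {}" "subset.chain \<A> \<C>" "\<forall>W\<in>\<C>. openin X W"
  obtains W where "W \<in> \<C>" "K \<subseteq> W"
proof -
  obtain W0 where "W0 \<in> \<C>" using \<open>\<C> \<noteq> {}\<close> by blast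
  have "\<exists>\<F>. finite \<F> \<and> \<F> \<subseteq> \<C> \<and> K \<subseteq> \<Union>\<F>"
    using assms(1,2,5) unfolding compactin_def by simp
  then obtain \<F> where \<F>: "finite \<F>" "\<F> \<subseteq> \<C>" "K \<subseteq> \<Union>\<F>" by blast
  then have "insert W0 \<F> \<subseteq> \<C>" using \<open>W0 \<in> \<C>\<close> by blast
  then have "subset.chain \<A> (insert W0 \<F>)"
    using assms(4) unfolding subset_chain_def by (meson subset_trans subsetD)
  then have "\<Union>(insert W0 \<F>) \<in> insert W0 \<F>" using \<F>(1) by (intro Union_in_chain) auto
  moreover have "K \<subseteq> \<Union>(insert W0 \<F>)" using \<F>(3) by blast
  ultimately show thesis using that \<open>insert W0 \<F> \<subseteq> \<C>\<close> by blast
qed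

text \<open>The last property says that A is a minimal closed set meeting every member of \<open>\<K>\<close>.\<close>

lemma minimal_closedin_meeting_compactins:
  assumes U: "openin X U"
    and compact: "\<And>K. K \<in> \<K> \<Longrightarrow> compactin X K"
    and not_in_U: "\<And>K. K \<in> \<K> \<Longrightarrow> \<not> K \<subseteq> U"
  obtains A where "closedin X A" "A \<inter> U = {}" "\<And>K. K \<in> \<K> \<Longrightarrow> K \<inter> A \<noteq> {}"
    "\<And>V. openin X V \<Longrightarrow> A \<inter> V \<noteq> {} \<Longrightarrow> \<exists>K\<in>\<K>. K \<inter> A \<subseteq> V"
proof -
  define \<O> where "\<O> = {W. openin X W \<and> U \<subseteq> W \<and> (\<forall>K\<in>\<K>. \<not> K \<subseteq> W)}"
  have "\<forall>\<C>\<in>chains \<O>. \<exists>W\<in>\<O>. \<forall>V\<in>\<C>. V \<subseteq> W"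
  proof
    fix \<C> assume \<C>: "\<C> \<in> chains \<O>"
    show "\<exists>W\<in>\<O>. \<forall>V\<in>\<C>. V \<subseteq> W"
    proof (cases "\<C> = {}")
      case True
      then show ?thesis using U not_in_U unfolding \<O>_def by blast
    next
      case False
      have \<C>_\<O>: "\<C> \<subseteq> \<O>" using chainsD2[OF \<C>] .
      then have \<C>_open: "\<forall>W\<in>\<C>. openin X W" unfolding \<O>_def by blast
      have "\<not> K \<subseteq> \<Union>\<C>" if K: "K \<in> \<K>" for K
      proof
        assume "K \<subseteq> \<Union>\<C>"
        moreover have "subset.chain \<O> \<C>" using \<C> unfolding chains_alt_def by blast
        ultimately obtain W where "W \<in> \<C>" "K \<subseteq> W"
          using compactin_subset_chain_member[OF compact[OF K] _ \<open>\<C> \<noteq> {}\<close> _ \<C>_open] by blast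
        then show False using \<C>_\<O> K unfolding \<O>_def by blast
      qed
      moreover have "openin X (\<Union>\<C>)" using \<C>_open by (intro openin_Union) blast
      moreover have "U \<subseteq> \<Union>\<C>" using False \<C>_\<O> unfolding \<O>_def by blast
      ultimately have "\<Union>\<C> \<in> \<O>" unfolding \<O>_def by blast
      then show ?thesis by blast
    qed
  qed
  from Zorn_Lemma2[OF this] obtain W where W: "W \<in> \<O>" and W_max: "\<forall>V\<in>\<O>. W \<subseteq> V \<longrightarrow> V = W"
    by blast
  show thesis
  proof
    show "closedin X (topspace X - W)" using W unfolding \<O>_def by blast
    show "(topspace X - W) \<inter> U = {}" using W unfolding \<O>_def by blast
    show "K \<inter> (topspace X - W) \<noteq> {}" if "K \<in> \<K>" for K
      using W compactin_subset_topspace[OF compact[OF that]] that unfolding \<O>_def by blast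
    fix V assume "openin X V" "(topspace X - W) \<inter> V \<noteq> {}"
    then have "W \<union> V \<noteq> W" using openin_subset by blast
    then have "W \<union> V \<notin> \<O>" using W_max by blast
    then obtain K where "K \<in> \<K>" "K \<subseteq> W \<union> V" using W \<open>openin X V\<close> unfolding \<O>_def by blast
    then show "\<exists>K\<in>\<K>. K \<inter> (topspace X - W) \<subseteq> V" by blast
  qed
qed

lemma escaping_elements_sup_closed:
  fixes A U :: "'a::complete_lattice set"
  assumes U: "openin Sigma_L U"
    and compact: "\<And>K. K \<in> \<K> \<Longrightarrow> compactin Sigma_L K"
    and filtered: "\<And>K1 K2. K1 \<in> \<K> \<Longrightarrow> K2 \<in> \<K> \<Longrightarrow> \<exists>K\<in>\<K>. K \<subseteq> K1 \<inter> K2"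
    and A: "closedin Sigma_L A" "\<And>K. K \<in> \<K> \<Longrightarrow> K \<inter> A \<noteq> {}"
    and minimal: "\<And>V. openin Sigma_L V \<Longrightarrow> A \<inter> V \<noteq> {} \<Longrightarrow> \<exists>K\<in>\<K>. K \<inter> A \<subseteq> V"
    and c: "\<forall>K\<in>\<K>. \<exists>y\<in>K \<inter> A. y \<squnion> c \<notin> U" and "a \<in> A"
  shows "\<forall>K\<in>\<K>. \<exists>y\<in>K \<inter> A. y \<squnion> (c \<squnion> a) \<notin> U"
proof
  fix K assume "K \<in> \<K>"
  have A_c: "y \<squnion> c \<notin> U" if "y \<in> A" for y
  proof
    assume "y \<squnion> c \<in> U"
    with that have "A \<inter> {y. y \<squnion> c \<in> U} \<noteq> {}" by blast
    then obtain K' where "K' \<in> \<K>" "K' \<inter> A \<subseteq> {y. y \<squnion> c \<in> U}"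
      using minimal[OF openin_Sigma_L_sup_const[OF U]] by blast
    then show False using c by blast
  qed
  let ?W = "{z. \<forall>y\<in>K \<inter> A. y \<squnion> z \<in> U}"
  show "\<exists>y\<in>K \<inter> A. y \<squnion> (c \<squnion> a) \<notin> U"
  proof (rule ccontr)
    assume "\<not> ?thesis"
    then have "a \<in> A \<inter> {z. z \<squnion> c \<in> ?W}" using \<open>a \<in> A\<close> by (simp add: sup_commute)
    moreover have "compactin Sigma_L (K \<inter> A)"
      using closed_Int_compactin[OF A(1) compact[OF \<open>K \<in> \<K>\<close>]] by (simp add: Int_commute)
    then have "openin Sigma_L ?W" using U by (rule openin_Sigma_L_compact_sup)
    ultimately obtain K' where "K' \<in> \<K>" "K' \<inter> A \<subseteq> {z. z \<squnion> c \<in> ?W}"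
      using minimal[OF openin_Sigma_L_sup_const] by blast
    moreover obtain K'' where "K'' \<in> \<K>" "K'' \<subseteq> K \<inter> K'"
      using filtered[OF \<open>K \<in> \<K>\<close> \<open>K' \<in> \<K>\<close>] by blast
    moreover obtain y where "y \<in> K'' \<inter> A" using A(2)[OF \<open>K'' \<in> \<K>\<close>] by blast
    ultimately have "y \<squnion> (y \<squnion> c) \<in> U" by blast
    then have "y \<squnion> c \<in> U" by (simp add: sup_assoc[symmetric])
    then show False using A_c \<open>y \<in> K'' \<inter> A\<close> by blast
  qed
qed

text \<open>Xi and Lawson's argument: otherwise there is a closed A disjoint from U and minimal among
  the closed sets meeting every K. Let G be the set of those c such that every \<open>K \<inter> A\<close> contains
  some y with \<open>y \<squnion> c \<notin> U\<close>. Then G is Scott closed, contains \<open>\<bottom>\<close> and absorbs joins with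
  elements of A, so \<open>Sup A \<in> G\<close>; but \<open>Sup A\<close> lies in every K, hence in U.\<close>

lemma well_filtered_Sigma_L:
  fixes \<K> :: "'a::complete_lattice set set"
  assumes "\<K> \<noteq> {}"
    and compact: "\<And>K. K \<in> \<K> \<Longrightarrow> compactin Sigma_L K"
    and upper: "\<And>K x y. K \<in> \<K> \<Longrightarrow> x \<in> K \<Longrightarrow> x \<le> y \<Longrightarrow> y \<in> K"
    and filtered: "\<And>K1 K2. K1 \<in> \<K> \<Longrightarrow> K2 \<in> \<K> \<Longrightarrow> \<exists>K\<in>\<K>. K \<subseteq> K1 \<inter> K2"
    and U: "openin Sigma_L U" and "\<Inter>\<K> \<subseteq> U"
  shows "\<exists>K\<in>\<K>. K \<subseteq> U"
proof (rule ccontr)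
  assume "\<not> ?thesis"
  then have "\<And>K. K \<in> \<K> \<Longrightarrow> \<not> K \<subseteq> U" by blast
  then obtain A where A: "closedin Sigma_L A" "A \<inter> U = {}" "\<And>K. K \<in> \<K> \<Longrightarrow> K \<inter> A \<noteq> {}"
    and minimal: "\<And>V. openin Sigma_L V \<Longrightarrow> A \<inter> V \<noteq> {} \<Longrightarrow> \<exists>K\<in>\<K>. K \<inter> A \<subseteq> V"
    using minimal_closedin_meeting_compactins[OF U compact] by blast
  define G where "G = {c. \<forall>K\<in>\<K>. \<exists>y\<in>K \<inter> A. y \<squnion> c \<notin> U}"
  have "openin Sigma_L {c. \<forall>y\<in>K \<inter> A. y \<squnion> c \<in> U}" if "K \<in> \<K>" for K
    using closed_Int_compactin[OF A(1) compact[OF that]] U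
    by (simp add: Int_commute openin_Sigma_L_compact_sup)
  then have "openin Sigma_L (\<Union>K\<in>\<K>. {c. \<forall>y\<in>K \<inter> A. y \<squnion> c \<in> U})" by blast
  moreover have "- G = (\<Union>K\<in>\<K>. {c. \<forall>y\<in>K \<inter> A. y \<squnion> c \<in> U})" unfolding G_def by blast
  ultimately have "closedin Sigma_L G" unfolding closedin_Sigma_L by simp
  moreover have "\<bottom> \<in> G" using A(2,3) unfolding G_def by fastforce
  moreover have "c \<squnion> a \<in> G" if "c \<in> G" "a \<in> A" for c a
    using escaping_elements_sup_closed[OF U compact filtered A(1,3) minimal] that
    unfolding G_def by blast
  ultimately have "Sup A \<in> G" by (rule closedin_Sigma_L_Sup_mem_if_sup_stable)
  moreover obtain K where "K \<in> \<K>" using \<open>\<K> \<noteq> {}\<close> by blast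
  ultimately obtain y where "y \<in> A" "y \<squnion> Sup A \<notin> U" unfolding G_def by blast
  then have "Sup A \<notin> U" by (simp add: Sup_upper sup_absorb2)
  moreover have "Sup A \<in> K'" if "K' \<in> \<K>" for K'
    using A(3)[OF that] upper[OF that] Sup_upper by blast
  ultimately show False using \<open>\<Inter>\<K> \<subseteq> U\<close> by blast
qed

section \<open>\<open>\<Sigma>L\<close> as a retract of \<open>\<Sigma>\<Gamma>(L)\<close>\<close>

lemma atMost_in_Gamma_L: "{..x} \<in> Gamma_L"
  unfolding Gamma_L_def using closedin_Sigma_L_atMost by blast

lemma continuous_map_Sigma_Gamma_atMost: "continuous_map Sigma_L Sigma_Gamma atMost"
  unfolding Sigma_L_def Sigma_Gamma_def
proof (rule continuous_map_scott_topology)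
  fix D and s :: 'a assume D: "directed_in UNIV (\<le>) D" and "is_lub_in UNIV (\<le>) D s"
  then have s: "s = Sup D" by simp
  show "is_lub_in Gamma_L (\<subseteq>) (atMost ` D) {..s}"
    unfolding is_lub_in_def
  proof (intro conjI ballI impI atMost_in_Gamma_L)
    show "B \<subseteq> {..s}" if "B \<in> atMost ` D" for B
      using that s by (auto intro: order_trans Sup_upper)
    fix C assume "C \<in> Gamma_L" "\<forall>B\<in>atMost ` D. B \<subseteq> C"
    then have "closedin Sigma_L C" "D \<subseteq> C" unfolding Gamma_L_def by auto
    then show "{..s} \<subseteq> C"
      using s closedin_Sigma_L_directed_Sup[OF _ D] closedin_Sigma_L_lower by blast
  qed
qed (auto intro: atMost_in_Gamma_L)

lemma continuous_map_Sigma_Gamma_Sup: "continuous_map Sigma_Gamma Sigma_L Sup"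
  unfolding Sigma_L_def Sigma_Gamma_def
proof (rule continuous_map_scott_topology)
  fix \<D> S assume "directed_in Gamma_L (\<subseteq>) \<D>" "is_lub_in Gamma_L (\<subseteq>) \<D> S"
  then have "S \<in> Gamma_L" and upper: "\<forall>B\<in>\<D>. B \<subseteq> S"
    and least: "\<forall>C\<in>Gamma_L. (\<forall>B\<in>\<D>. B \<subseteq> C) \<longrightarrow> S \<subseteq> C"
    unfolding is_lub_in_def by blast+
  let ?m = "Sup (Sup ` \<D>)"
  have "\<forall>B\<in>\<D>. B \<subseteq> {..?m}" by (auto intro: order_trans Sup_upper SUP_upper)
  then have "S \<subseteq> {..?m}" using least atMost_in_Gamma_L by blast
  then have "Sup S \<le> ?m" by (auto intro: Sup_least)
  moreover have "?m \<le> Sup S" using upper by (simp add: SUP_least Sup_subset_mono)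
  ultimately show "is_lub_in UNIV (\<le>) (Sup ` \<D>) (Sup S)" by simp
qed (auto intro: Sup_subset_mono)

lemma sober_space_Sigma_L_if_Sigma_Gamma:
  "sober_space (Sigma_Gamma :: 'a::complete_lattice set topology) \<Longrightarrow> sober_space (Sigma_L :: 'a topology)"
  by (rule sober_space_retract[OF continuous_map_Sigma_Gamma_atMost continuous_map_Sigma_Gamma_Sup
        _ _ t0_space_Sigma_L]) simp_all

section \<open>Sobriety of \<open>\<Sigma>Q(L)\<close>\<close>

lemma atLeast_in_Q_L: "{x..} \<in> Q_L"
proof -
  have "compactin Sigma_L {x..}"
    unfolding compactin_def
  proof (intro conjI allI impI)
    fix \<U> assume \<U>: "(\<forall>U\<in>\<U>. openin Sigma_L U) \<and> {x..} \<subseteq> \<Union>\<U>"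
    then obtain U where "U \<in> \<U>" "x \<in> U" by auto
    then have "{x..} \<subseteq> U" using \<U> openin_Sigma_L_upper by fastforce
    then show "\<exists>\<F>. finite \<F> \<and> \<F> \<subseteq> \<U> \<and> {x..} \<subseteq> \<Union>\<F>"
      using \<open>U \<in> \<U>\<close> by (intro exI[of _ "{U}"]) auto
  qed simp
  then show ?thesis unfolding Q_L_def by (auto intro: order_trans)
qed

lemma continuous_map_Sigma_Q_atLeast: "continuous_map Sigma_L Sigma_Q atLeast"
  unfolding Sigma_L_def Sigma_Q_def
proof (rule continuous_map_scott_topology)
  fix D and s :: 'a assume "directed_in UNIV (\<le>) D" "is_lub_in UNIV (\<le>) D s"
  then have s: "s = Sup D" by simp
  show "is_lub_in Q_L (\<lambda>A B. B \<subseteq> A) (atLeast ` D) {s..}"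
    unfolding is_lub_in_def
  proof (intro conjI ballI impI atLeast_in_Q_L)
    show "{s..} \<subseteq> B" if "B \<in> atLeast ` D" for B
      using that s by (auto intro: order_trans Sup_upper)
    show "K \<subseteq> {s..}" if "\<forall>B\<in>atLeast ` D. K \<subseteq> B" for K
      using that s by (auto intro: Sup_least)
  qed
qed (auto intro: atLeast_in_Q_L)

lemma topspace_Sigma_Q: "topspace Sigma_Q = Q_L"
  unfolding Sigma_Q_def by (rule topspace_scott_topology)

lemma Sigma_Q_closure_of_singleton:
  "K0 \<in> Q_L \<Longrightarrow> Sigma_Q closure_of {K0} = {K \<in> Q_L. K0 \<subseteq> K}"
  unfolding Sigma_Q_def by (subst scott_topology_closure_of_singleton) auto

lemma openin_Sigma_Q_subsets:
  assumes U: "openin Sigma_L U"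
  shows "openin Sigma_Q {K \<in> Q_L. K \<subseteq> U}"
  unfolding Sigma_Q_def openin_scott_topology scott_open_def
proof (intro conjI allI impI ballI)
  fix \<D> S assume \<D>: "directed_in Q_L (\<lambda>A B. B \<subseteq> A) \<D>" and S: "is_lub_in Q_L (\<lambda>A B. B \<subseteq> A) \<D> S"
    and "S \<in> {K \<in> Q_L. K \<subseteq> U}"
  have "\<D> \<subseteq> Q_L" "\<D> \<noteq> {}" and filtered: "\<forall>K1\<in>\<D>. \<forall>K2\<in>\<D>. \<exists>K\<in>\<D>. K \<subseteq> K1 \<and> K \<subseteq> K2"
    using \<D> unfolding directed_in_def by blast+
  then have compact: "\<And>K. K \<in> \<D> \<Longrightarrow> compactin Sigma_L K"
    and upper: "\<And>K x y. K \<in> \<D> \<Longrightarrow> x \<in> K \<Longrightarrow> x \<le> y \<Longrightarrow> y \<in> K"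
    unfolding Q_L_def by blast+
  have "\<Inter>\<D> \<subseteq> S"
  proof
    fix z assume "z \<in> \<Inter>\<D>"
    then have "\<forall>K\<in>\<D>. {z..} \<subseteq> K" using upper by fastforce
    then have "{z..} \<subseteq> S" using S atLeast_in_Q_L unfolding is_lub_in_def by blast
    then show "z \<in> S" by blast
  qed
  then have "\<Inter>\<D> \<subseteq> U" using \<open>S \<in> {K \<in> Q_L. K \<subseteq> U}\<close> by blast
  moreover have "\<exists>K\<in>\<D>. K \<subseteq> K1 \<inter> K2" if "K1 \<in> \<D>" "K2 \<in> \<D>" for K1 K2
    using filtered[rule_format, OF that] by auto
  ultimately have "\<exists>K\<in>\<D>. K \<subseteq> U"
    using well_filtered_Sigma_L[OF \<open>\<D> \<noteq> {}\<close> compact upper _ U] by simp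
  then show "\<D> \<inter> {K \<in> Q_L. K \<subseteq> U} \<noteq> {}" using \<open>\<D> \<subseteq> Q_L\<close> by blast
qed auto

lemma Sup_in_irreducible_if_sober_Sigma_Q:
  assumes "sober_space (Sigma_Q :: 'a::complete_lattice set topology)"
    and A: "closedin Sigma_L A" "irreducible_in Sigma_L (A :: 'a set)"
  shows "Sup A \<in> A"
proof (rule ccontr)
  assume "Sup A \<notin> A"
  let ?B = "Sigma_Q closure_of (atLeast ` A)"
  have "irreducible_in Sigma_Q ?B"
    using irreducible_in_closure_of_image[OF continuous_map_Sigma_Q_atLeast A(2)] .
  then obtain K0 where "K0 \<in> Q_L" "?B = Sigma_Q closure_of {K0}"
    using sober_space_generic_point[OF assms(1) closedin_closure_of] topspace_Sigma_Q by metis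
  then have K0: "?B = {K \<in> Q_L. K0 \<subseteq> K}" by (simp add: Sigma_Q_closure_of_singleton)
  have "atLeast ` A \<subseteq> topspace Sigma_Q" using atLeast_in_Q_L by (auto simp: topspace_Sigma_Q)
  then have "atLeast ` A \<subseteq> ?B" by (rule closure_of_subset)
  then have "K0 \<subseteq> {a..}" if "a \<in> A" for a using K0 that by blast
  then have "K0 \<subseteq> {Sup A..}" by (auto intro: Sup_least)
  then have "K0 \<subseteq> - A" using closedin_Sigma_L_lower[OF A(1)] \<open>Sup A \<notin> A\<close> by auto
  then have "{K \<in> Q_L. K \<subseteq> - A} \<inter> ?B \<noteq> {}" using \<open>K0 \<in> Q_L\<close> K0 by blast
  moreover have "openin Sigma_Q {K \<in> Q_L. K \<subseteq> - A}"
    using A(1) unfolding closedin_Sigma_L by (rule openin_Sigma_Q_subsets)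
  ultimately have "{K \<in> Q_L. K \<subseteq> - A} \<inter> atLeast ` A \<noteq> {}"
    by (simp add: openin_Int_closure_of_eq_empty)
  then show False by auto
qed

lemma sober_space_Sigma_L_if_Sigma_Q:
  assumes "sober_space (Sigma_Q :: 'a::complete_lattice set topology)"
  shows "sober_space (Sigma_L :: 'a topology)"
  unfolding sober_space_def
proof (intro conjI allI impI t0_space_Sigma_L)
  fix A :: "'a set" assume "closedin Sigma_L A \<and> irreducible_in Sigma_L A"
  then have "A = Sigma_L closure_of {Sup A}"
    using Sup_in_irreducible_if_sober_Sigma_Q[OF assms] closedin_Sigma_L_eq_closure_of_Sup by blast
  then show "\<exists>x\<in>topspace Sigma_L. A = Sigma_L closure_of {x}" by auto
qed

theorem corollary4p14:
  assumes "countable (UNIV :: 'a::complete_lattice set)"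
    and "\<not> sober_space (Sigma_L :: 'a topology)"
  shows "\<not> sober_space (Sigma_Gamma :: 'a set topology) \<and> \<not> sober_space (Sigma_Q :: 'a set topology)"
  using assms(2) sober_space_Sigma_L_if_Sigma_Gamma sober_space_Sigma_L_if_Sigma_Q by blast

end
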